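(* Let $\mathbb{G}$ be an $E$-group and $\alpha_1,\alpha_2,\beta\subsetneq E$, and suppose $\mathbb{G}[\alpha_1]$ and $\mathbb{G}[\alpha_2]$ are $2$-acyclic. Then for every vertex $x$ of the free amalgam $\mathrm{Cay}(\mathbb{G}[\alpha_1])\oplus\mathrm{Cay}(\mathbb{G}[\alpha_2])$, the $\beta$-connected component of $x$ is isomorphic, as an $E$-graph, either to $\mathrm{Cay}(\mathbb{G}[\beta\cap\alpha_1])$, or to $\mathrm{Cay}(\mathbb{G}[\beta\cap\alpha_2])$, or to the free amalgam $\mathrm{Cay}(\mathbb{G}[\beta\cap\alpha_1])\oplus\mathrm{Cay}(\mathbb{G}[\beta\cap\alpha_2])$.
   Context: Let $E$ be a finite set. An $E$-group is a group $\mathbb{G}$ with $E\subseteq\mathbb{G}$ generating it and each $e\in E$ satisfying $e\neq1$, $e^2=1$; $\mathbb{G}[\gamma]$ is the subgroup generated by $\gamma\subseteq E$, regarded as a $\gamma$-group. A coset cycle of length $n\ge2$ in a $\gamma$-group $\mathbb{K}$ is $(g_i,\gamma_i)_{i\in\mathbb{Z}_n}$ with $\gamma_i\subseteq\gamma$, $g_{i+1}\in g_i\mathbb{K}[\gamma_i]$ and $g_i\mathbb{K}[\gamma_i\cap\gamma_{i-1}]\cap g_{i+1}\mathbb{K}[\gamma_i\cap\gamma_{i+1}]=\emptyset$; $2$-acyclic means there is no coset cycle of length $2$. An $E$-graph is $(V,(R_e)_{e\in E})$ with each $R_e$ symmetric and each vertex having at most one $R_e$-neighbour; an isomorphism of $E$-graphs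 is a bijection preserving each $R_e$ in both directions. $\mathrm{Cay}(\mathbb{G}[\gamma])$ is the $E$-graph on $\mathbb{G}[\gamma]$ with $R_e=\{(g,ge)\}$ for $e\in\gamma$ and $R_e=\emptyset$ for $e\notin\gamma$. For $\gamma_1,\gamma_2\subseteq E$, the free amalgam $\mathrm{Cay}(\mathbb{G}[\gamma_1])\oplus\mathrm{Cay}(\mathbb{G}[\gamma_2])$ is the $E$-graph whose vertex set is the quotient of $(\mathbb{G}[\gamma_1]\times\{1\})\cup(\mathbb{G}[\gamma_2]\times\{2\})$ obtained by identifying $(g,1)$ with $(g,2)$ for all $g\in\mathbb{G}[\gamma_1\cap\gamma_2]$, and whose $R_e$ is the image of $\bigcup_{i:e\in\gamma_i}\{((g,i),(ge,i)):g\in\mathbb{G}[\gamma_i]\}$. For $\beta\subseteq E$, the $\beta$-connected component of a vertex $x$ is the set of vertices reachable from $x$ along edges in $R_e$ with $e\in\beta$, with the induced $R_e$ for $e\in\beta$ and $R_e=\emptyset$ for $e\notin\beta$. *)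

theory Defs
  imports "HOL-Algebra.Algebra"
begin

definition E_group :: "('g, 'b) monoid_scheme \<Rightarrow> 'g set \<Rightarrow> bool" where
  "E_group G E \<longleftrightarrow> group G \<and> finite E \<and> E \<subseteq> carrier G \<and> generate G E = carrier G \<and>
     (\<forall>e\<in>E. e \<noteq> \<one>\<^bsub>G\<^esub> \<and> e \<otimes>\<^bsub>G\<^esub> e = \<one>\<^bsub>G\<^esub>)"

definition coset_cycle ::
  "('g, 'b) monoid_scheme \<Rightarrow> 'g set \<Rightarrow> nat \<Rightarrow> (nat \<Rightarrow> 'g) \<Rightarrow> (nat \<Rightarrow> 'g set) \<Rightarrow> bool" where
  "coset_cycle G \<gamma> n g \<delta> \<longleftrightarrow> n \<ge> 2 \<and>
     (\<forall>i<n. g i \<in> generate G \<gamma> \<and> \<delta> i \<subseteq> \<gamma> \<and>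
        g ((i + 1) mod n) \<in> l_coset G (g i) (generate G (\<delta> i)) \<and>
        l_coset G (g i) (generate G (\<delta> i \<inter> \<delta> ((i + n - 1) mod n))) \<inter>
        l_coset G (g ((i + 1) mod n)) (generate G (\<delta> i \<inter> \<delta> ((i + 1) mod n))) = {})"

definition two_acyclic :: "('g, 'b) monoid_scheme \<Rightarrow> 'g set \<Rightarrow> bool" where
  "two_acyclic G \<gamma> \<longleftrightarrow> \<not> (\<exists>g \<delta>. coset_cycle G \<gamma> 2 g \<delta>)"

type_synonym ('v, 'e) egraph = "'v set \<times> ('e \<Rightarrow> ('v \<times> 'v) set)"

definition is_egraph :: "'e set \<Rightarrow> ('v, 'e) egraph \<Rightarrow> bool" where
  "is_egraph E A \<longleftrightarrow> (\<forall>e\<in>E. snd A e \<subseteq> fst A \<times> fst A \<and> sym (snd A e) \<and>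
      (\<forall>x y z. (x, y) \<in> snd A e \<longrightarrow> (x, z) \<in> snd A e \<longrightarrow> y = z))"

definition egraph_iso :: "'e set \<Rightarrow> ('v, 'e) egraph \<Rightarrow> ('w, 'e) egraph \<Rightarrow> bool" where
  "egraph_iso E A B \<longleftrightarrow> (\<exists>f. bij_betw f (fst A) (fst B) \<and>
      (\<forall>e\<in>E. \<forall>x\<in>fst A. \<forall>y\<in>fst A. (x, y) \<in> snd A e \<longleftrightarrow> (f x, f y) \<in> snd B e))"

definition Cay :: "('g, 'b) monoid_scheme \<Rightarrow> 'g set \<Rightarrow> ('g, 'g) egraph" where
  "Cay G \<gamma> = (generate G \<gamma>,
     (\<lambda>e. if e \<in> \<gamma> then {(g, g \<otimes>\<^bsub>G\<^esub> e) | g. g \<in> generate G \<gamma>} else {}))"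

text \<open>Free amalgam Cay(G[g1]) + Cay(G[g2]): quotient of the disjoint union
  (G[g1] x {1}) u (G[g2] x {2}) identifying (g,1) and (g,2) for g in G[g1 n g2].\<close>
definition amalg_dom :: "('g, 'b) monoid_scheme \<Rightarrow> 'g set \<Rightarrow> 'g set \<Rightarrow> ('g \<times> nat) set" where
  "amalg_dom G \<gamma>1 \<gamma>2 = (generate G \<gamma>1 \<times> {1}) \<union> (generate G \<gamma>2 \<times> {2})"

definition amalg_rel :: "('g, 'b) monoid_scheme \<Rightarrow> 'g set \<Rightarrow> 'g set \<Rightarrow> (('g \<times> nat) \<times> ('g \<times> nat)) set" where
  "amalg_rel G \<gamma>1 \<gamma>2 = Id_on (amalg_dom G \<gamma>1 \<gamma>2) \<union>
     {((g, 1), (g, 2)) | g. g \<in> generate G (\<gamma>1 \<inter> \<gamma>2)} \<union>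
     {((g, 2), (g, 1)) | g. g \<in> generate G (\<gamma>1 \<inter> \<gamma>2)}"

definition amalgam :: "('g, 'b) monoid_scheme \<Rightarrow> 'g set \<Rightarrow> 'g set \<Rightarrow> (('g \<times> nat) set, 'g) egraph" where
  "amalgam G \<gamma>1 \<gamma>2 =
     (amalg_dom G \<gamma>1 \<gamma>2 // amalg_rel G \<gamma>1 \<gamma>2,
      (\<lambda>e. {(amalg_rel G \<gamma>1 \<gamma>2 `` {(g, i)}, amalg_rel G \<gamma>1 \<gamma>2 `` {(g \<otimes>\<^bsub>G\<^esub> e, i)}) | g i.
              (i = 1 \<and> e \<in> \<gamma>1 \<and> g \<in> generate G \<gamma>1) \<or> (i = 2 \<and> e \<in> \<gamma>2 \<and> g \<in> generate G \<gamma>2)}))"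

definition component :: "'e set \<Rightarrow> ('v, 'e) egraph \<Rightarrow> 'v \<Rightarrow> ('v, 'e) egraph" where
  "component \<beta> A x =
     (let V = (\<Union>e\<in>\<beta>. snd A e)\<^sup>* `` {x}
      in (V, (\<lambda>e. if e \<in> \<beta> then snd A e \<inter> (V \<times> V) else {})))"

end

theory Submission
  imports Defs
begin

text \<open>Write \<open>K = G[\<alpha>1 \<inter> \<alpha>2]\<close> and \<open>[g, i]\<close> for the vertex of the amalgam represented by
  \<open>g \<in> G[\<alpha>i]\<close>. If the coset \<open>g G[\<beta> \<inter> \<alpha>i]\<close> avoids \<open>K\<close>, no vertex reachable from
  \<open>[g, i]\<close> along \<open>\<beta>\<close>-edges is identified with a vertex of the other factor, and
  \<open>a \<mapsto> [g a, i]\<close> maps \<open>Cay(G[\<beta> \<inter> \<alpha>i])\<close> onto the component. Otherwise the coset contains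
  some \<open>p \<in> K\<close>, and left translation by \<open>p\<close> maps the amalgam of \<open>G[\<beta> \<inter> \<alpha>1]\<close> and
  \<open>G[\<beta> \<inter> \<alpha>2]\<close> onto the component. It respects the identifications exactly because
  2-acyclicity of \<open>G[\<alpha>i]\<close> gives \<open>G[\<beta> \<inter> \<alpha>i] \<inter> K = G[\<beta> \<inter> \<alpha>1 \<inter> \<alpha>2]\<close>, so that
  \<open>p a \<in> K\<close> iff \<open>a \<in> G[\<beta> \<inter> \<alpha>1 \<inter> \<alpha>2]\<close> for \<open>a \<in> G[\<beta> \<inter> \<alpha>i]\<close>.\<close>

lemma egraph_iso_componentI:
  fixes A :: "('v, 'e) egraph" and B :: "('w, 'e) egraph" and f :: "'w \<Rightarrow> 'v"
  assumes inj: "inj_on f (fst B)"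
    and start: "y \<in> fst B" "x = f y"
    and reach: "\<And>v. v \<in> fst B \<Longrightarrow> (x, f v) \<in> (\<Union>e\<in>\<beta>. snd A e)\<^sup>*"
    and nbhd: "\<And>e u w. e \<in> \<beta> \<Longrightarrow> u \<in> fst B \<Longrightarrow>
      (f u, w) \<in> snd A e \<longleftrightarrow> (\<exists>v\<in>fst B. (u, v) \<in> snd B e \<and> w = f v)"
    and outside: "\<And>e. e \<notin> \<beta> \<Longrightarrow> snd B e = {}"
  shows "egraph_iso E (component \<beta> A x) B"
proof -
  let ?S = "\<Union>e\<in>\<beta>. snd A e"
  have comp: "?S\<^sup>* `` {x} = f ` fst B"
  proof
    show "?S\<^sup>* `` {x} \<subseteq> f ` fst B"
    proof
      fix z assume "z \<in> ?S\<^sup>* `` {x}"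
      then have "(x, z) \<in> ?S\<^sup>*" by simp
      then show "z \<in> f ` fst B"
      proof (induction rule: rtrancl_induct)
        case base
        then show ?case using start by blast
      next
        case (step y z)
        then obtain u e where "u \<in> fst B" "y = f u" "e \<in> \<beta>" "(f u, z) \<in> snd A e" by blast
        then show ?case using nbhd by blast
      qed
    qed
    show "f ` fst B \<subseteq> ?S\<^sup>* `` {x}" using reach by blast
  qed
  have edge: "(f u, f v) \<in> snd A e \<longleftrightarrow> (u, v) \<in> snd B e"
    if "e \<in> \<beta>" "u \<in> fst B" "v \<in> fst B" for e u v
    using nbhd[OF that(1,2)] inj that(3) by (auto dest: inj_onD)
  show ?thesis
    unfolding egraph_iso_def component_def Let_def fst_conv snd_conv comp
  proof (rule exI[of _ "inv_into (fst B) f"], intro conjI ballI)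
    show "bij_betw (inv_into (fst B) f) (f ` fst B) (fst B)"
      using inj by (simp add: bij_betw_inv_into inj_on_imp_bij_betw)
    fix e y z assume "y \<in> f ` fst B" "z \<in> f ` fst B"
    then obtain u v where "u \<in> fst B" "v \<in> fst B" "y = f u" "z = f v" by blast
    then show "(y, z) \<in> (if e \<in> \<beta> then snd A e \<inter> (f ` fst B \<times> f ` fst B) else {}) \<longleftrightarrow>
        (inv_into (fst B) f y, inv_into (fst B) f z) \<in> snd B e"
      using edge outside inj by auto
  qed
qed

lemma Cay_edge_iff:
  "(a, b) \<in> snd (Cay G \<gamma>) e \<longleftrightarrow> e \<in> \<gamma> \<and> a \<in> generate G \<gamma> \<and> b = a \<otimes>\<^bsub>G\<^esub> e"
  unfolding Cay_def by auto

lemma (in group) two_acyclic_generate_Int: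
  assumes acyclic: "two_acyclic G \<alpha>" and \<alpha>: "\<alpha> \<subseteq> carrier G" and \<delta>: "\<delta>0 \<subseteq> \<alpha>" "\<delta>1 \<subseteq> \<alpha>"
  shows "generate G \<delta>0 \<inter> generate G \<delta>1 \<subseteq> generate G (\<delta>0 \<inter> \<delta>1)"
proof
  fix h assume h: "h \<in> generate G \<delta>0 \<inter> generate G \<delta>1"
  let ?H = "generate G (\<delta>0 \<inter> \<delta>1)"
  show "h \<in> ?H"
  proof (rule ccontr)
    assume h_notin: "h \<notin> ?H"
    have H: "subgroup ?H G" using \<alpha> \<delta> by (intro generate_is_subgroup) auto
    have h_carrier: "h \<in> carrier G" using h \<alpha> \<delta> generate_in_carrier by blast
    have disjoint: "l_coset G \<one> ?H \<inter> l_coset G h ?H = {}"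
    proof (rule ccontr)
      assume "l_coset G \<one> ?H \<inter> l_coset G h ?H \<noteq> {}"
      then obtain a b where ab: "a \<in> ?H" "b \<in> ?H" "\<one> \<otimes> a = h \<otimes> b"
        unfolding l_coset_def by blast
      have "a \<in> carrier G" "b \<in> carrier G" using ab(1,2) subgroup.mem_carrier[OF H] by auto
      then have "h = a \<otimes> inv b" using ab(3) h_carrier inv_solve_right by simp
      then show False
        using h_notin ab(1,2) subgroup.m_closed[OF H] subgroup.m_inv_closed[OF H] by auto
    qed
    have inv_h: "inv h \<in> generate G \<delta>1" using h \<alpha> \<delta> generate_m_inv_closed by blast
    \<comment> \<open>the cosets of \<open>\<delta>0\<close> through \<open>\<one>\<close> and of \<open>\<delta>1\<close> through \<open>h\<close> form a coset cycle of length 2\<close>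
    let ?g = "\<lambda>i::nat. if i = 0 then \<one> else h" and ?d = "\<lambda>i::nat. if i = 0 then \<delta>0 else \<delta>1"
    have "coset_cycle G \<alpha> 2 ?g ?d"
      unfolding coset_cycle_def
    proof (intro conjI allI impI)
      fix i :: nat assume "i < 2"
      then consider "i = 0" | "i = 1" by linarith
      note cases = this
      show "?g i \<in> generate G \<alpha>"
        using cases h mono_generate[OF \<delta>(1)] generate.one by cases auto
      show "?d i \<subseteq> \<alpha>" using cases \<delta> by cases auto
      show "?g ((i + 1) mod 2) \<in> l_coset G (?g i) (generate G (?d i))"
        using cases h inv_h h_carrier unfolding l_coset_def by cases force+
      show "l_coset G (?g i) (generate G (?d i \<inter> ?d ((i + 2 - 1) mod 2))) \<inter>
          l_coset G (?g ((i + 1) mod 2)) (generate G (?d i \<inter> ?d ((i + 1) mod 2))) = {}"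
        using cases disjoint by cases (auto simp: Int_commute)
    qed simp
    then show False using acyclic unfolding two_acyclic_def by blast
  qed
qed

definition amalg_gens :: "'a set \<Rightarrow> 'a set \<Rightarrow> nat \<Rightarrow> 'a set" where
  "amalg_gens \<gamma>1 \<gamma>2 i = (if i = 1 then \<gamma>1 else \<gamma>2)"

lemma amalg_dom_iff:
  "(g, i) \<in> amalg_dom G \<gamma>1 \<gamma>2 \<longleftrightarrow> i \<in> {1, 2} \<and> g \<in> generate G (amalg_gens \<gamma>1 \<gamma>2 i)"
  unfolding amalg_dom_def amalg_gens_def by auto

lemma amalg_rel_Image:
  assumes "(g, i) \<in> amalg_dom G \<gamma>1 \<gamma>2"
  shows "amalg_rel G \<gamma>1 \<gamma>2 `` {(g, i)} =
    {g} \<times> (if g \<in> generate G (\<gamma>1 \<inter> \<gamma>2) then {1, 2} else {i})"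
proof (rule Set.set_eqI) \<comment> \<open>plain \<open>set_eqI\<close> is shadowed by HOL-Algebra's congruence version\<close>
  fix z
  show "z \<in> amalg_rel G \<gamma>1 \<gamma>2 `` {(g, i)} \<longleftrightarrow>
      z \<in> {g} \<times> (if g \<in> generate G (\<gamma>1 \<inter> \<gamma>2) then {1, 2} else {i})"
    using assms by (cases z) (auto simp: amalg_rel_def amalg_dom_def)
qed

lemma amalg_rel_Image_eq_iff:
  assumes "(g, i) \<in> amalg_dom G \<gamma>1 \<gamma>2" "(h, j) \<in> amalg_dom G \<gamma>1 \<gamma>2"
  shows "amalg_rel G \<gamma>1 \<gamma>2 `` {(g, i)} = amalg_rel G \<gamma>1 \<gamma>2 `` {(h, j)} \<longleftrightarrow>
    g = h \<and> (i = j \<or> g \<in> generate G (\<gamma>1 \<inter> \<gamma>2))"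
  unfolding amalg_rel_Image[OF assms(1)] amalg_rel_Image[OF assms(2)] times_eq_iff
  by (auto split: if_splits)

lemma amalgam_vertices:
  "fst (amalgam G \<gamma>1 \<gamma>2) =
    {amalg_rel G \<gamma>1 \<gamma>2 `` {(g, i)} | g i. (g, i) \<in> amalg_dom G \<gamma>1 \<gamma>2}"
  unfolding amalgam_def quotient_def by auto

lemma amalgam_edge_iff:
  "(U, V) \<in> snd (amalgam G \<gamma>1 \<gamma>2) e \<longleftrightarrow>
    (\<exists>g i. (g, i) \<in> amalg_dom G \<gamma>1 \<gamma>2 \<and> e \<in> amalg_gens \<gamma>1 \<gamma>2 i \<and>
       U = amalg_rel G \<gamma>1 \<gamma>2 `` {(g, i)} \<and> V = amalg_rel G \<gamma>1 \<gamma>2 `` {(g \<otimes>\<^bsub>G\<^esub> e, i)})"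
proof -
  have side: "(i = 1 \<and> e \<in> \<gamma>1 \<and> g \<in> generate G \<gamma>1) \<or> (i = 2 \<and> e \<in> \<gamma>2 \<and> g \<in> generate G \<gamma>2)
      \<longleftrightarrow> (g, i) \<in> amalg_dom G \<gamma>1 \<gamma>2 \<and> e \<in> amalg_gens \<gamma>1 \<gamma>2 i" for g i
    by (auto simp: amalg_dom_iff amalg_gens_def)
  show ?thesis
    unfolding amalgam_def snd_conv mem_Collect_eq side by blast
qed

lemma amalgam_edgeI:
  assumes "(g, i) \<in> amalg_dom G \<gamma>1 \<gamma>2" "e \<in> amalg_gens \<gamma>1 \<gamma>2 i"
  shows "(amalg_rel G \<gamma>1 \<gamma>2 `` {(g, i)}, amalg_rel G \<gamma>1 \<gamma>2 `` {(g \<otimes>\<^bsub>G\<^esub> e, i)})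
    \<in> snd (amalgam G \<gamma>1 \<gamma>2) e"
  unfolding amalgam_edge_iff using assms by blast

lemma amalgam_edgeE:
  assumes "(g, i) \<in> amalg_dom G \<gamma>1 \<gamma>2"
    and "(amalg_rel G \<gamma>1 \<gamma>2 `` {(g, i)}, V) \<in> snd (amalgam G \<gamma>1 \<gamma>2) e"
  obtains k where "(g, k) \<in> amalg_dom G \<gamma>1 \<gamma>2" "e \<in> amalg_gens \<gamma>1 \<gamma>2 k"
    "i = k \<or> g \<in> generate G (\<gamma>1 \<inter> \<gamma>2)" "V = amalg_rel G \<gamma>1 \<gamma>2 `` {(g \<otimes>\<^bsub>G\<^esub> e, k)}"
proof -
  obtain h k where hk: "(h, k) \<in> amalg_dom G \<gamma>1 \<gamma>2" "e \<in> amalg_gens \<gamma>1 \<gamma>2 k"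
    "amalg_rel G \<gamma>1 \<gamma>2 `` {(g, i)} = amalg_rel G \<gamma>1 \<gamma>2 `` {(h, k)}"
    "V = amalg_rel G \<gamma>1 \<gamma>2 `` {(h \<otimes>\<^bsub>G\<^esub> e, k)}"
    using assms(2) unfolding amalgam_edge_iff by blast
  have "g = h" "i = k \<or> g \<in> generate G (\<gamma>1 \<inter> \<gamma>2)"
    using amalg_rel_Image_eq_iff[OF assms(1) hk(1)] hk(3) by auto
  then show thesis using hk by (intro that[of k]) simp_all
qed

lemma (in group) amalgam_path:
  assumes i: "i \<in> {1, 2}" and gens: "amalg_gens \<gamma>1 \<gamma>2 i \<subseteq> carrier G"
    and \<delta>: "\<delta> \<subseteq> amalg_gens \<gamma>1 \<gamma>2 i" and involution: "\<And>e. e \<in> \<delta> \<Longrightarrow> e \<otimes> e = \<one>"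
    and a: "a \<in> generate G \<delta>" and g: "g \<in> generate G (amalg_gens \<gamma>1 \<gamma>2 i)"
  shows "(amalg_rel G \<gamma>1 \<gamma>2 `` {(g, i)}, amalg_rel G \<gamma>1 \<gamma>2 `` {(g \<otimes> a, i)})
    \<in> (\<Union>e\<in>\<delta>. snd (amalgam G \<gamma>1 \<gamma>2) e)\<^sup>*"
proof -
  have edge: "(amalg_rel G \<gamma>1 \<gamma>2 `` {(g, i)}, amalg_rel G \<gamma>1 \<gamma>2 `` {(g \<otimes> e, i)})
      \<in> (\<Union>e\<in>\<delta>. snd (amalgam G \<gamma>1 \<gamma>2) e)\<^sup>*"
    if e: "e \<in> \<delta>" and g: "g \<in> generate G (amalg_gens \<gamma>1 \<gamma>2 i)" for g e
  proof -
    have "(g, i) \<in> amalg_dom G \<gamma>1 \<gamma>2" using i g by (simp add: amalg_dom_iff)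
    then have "(amalg_rel G \<gamma>1 \<gamma>2 `` {(g, i)}, amalg_rel G \<gamma>1 \<gamma>2 `` {(g \<otimes> e, i)})
        \<in> snd (amalgam G \<gamma>1 \<gamma>2) e"
      using e \<delta> by (intro amalgam_edgeI) blast+
    then show ?thesis using e by (intro r_into_rtrancl UN_I)
  qed
  have sub: "subgroup (generate G (amalg_gens \<gamma>1 \<gamma>2 i)) G"
    using generate_is_subgroup[OF gens] .
  show ?thesis
    using a g
  proof (induction arbitrary: g)
    case one
    then show ?case using subgroup.mem_carrier[OF sub] by simp
  next
    case (incl e)
    then show ?case using edge by blast
  next
    case (inv e)
    have "inv e = e"
      using inv involution \<delta> gens by (intro inv_equality) auto
    then show ?case using edge inv by simp
  next
    case (eng a1 a2)
    have a1: "a1 \<in> generate G (amalg_gens \<gamma>1 \<gamma>2 i)" using eng.hyps(1) mono_generate[OF \<delta>] by blast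
    have a2: "a2 \<in> carrier G" using eng.hyps(2) generate_in_carrier \<delta> gens by blast
    have ga1: "g \<otimes> a1 \<in> generate G (amalg_gens \<gamma>1 \<gamma>2 i)"
      using subgroup.m_closed[OF sub eng.prems a1] .
    have "g \<otimes> a1 \<otimes> a2 = g \<otimes> (a1 \<otimes> a2)"
      using eng.prems a1 a2 subgroup.mem_carrier[OF sub] by (simp add: m_assoc)
    then show ?case
      using rtrancl_trans[OF eng.IH(1)[OF eng.prems] eng.IH(2)[OF ga1]] by simp
  qed
qed

locale two_acyclic_amalgam = group G for G :: "('a, 'b) monoid_scheme" (structure) +
  fixes \<alpha>1 \<alpha>2 \<beta> :: "'a set"
  assumes gens_carrier: "\<alpha>1 \<union> \<alpha>2 \<subseteq> carrier G"
    and gens_involution: "\<And>e. e \<in> \<alpha>1 \<union> \<alpha>2 \<Longrightarrow> e \<otimes> e = \<one>"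
    and two_acyclic1: "two_acyclic G \<alpha>1"
    and two_acyclic2: "two_acyclic G \<alpha>2"
begin

abbreviation "gens \<equiv> amalg_gens \<alpha>1 \<alpha>2"
abbreviation "K \<equiv> generate G (\<alpha>1 \<inter> \<alpha>2)"
abbreviation "K\<^sub>\<beta> \<equiv> generate G (\<beta> \<inter> \<alpha>1 \<inter> \<alpha>2)"
abbreviation "A \<equiv> amalgam G \<alpha>1 \<alpha>2"
abbreviation "A\<^sub>\<beta> \<equiv> amalgam G (\<beta> \<inter> \<alpha>1) (\<beta> \<inter> \<alpha>2)"
abbreviation "vertex g i \<equiv> amalg_rel G \<alpha>1 \<alpha>2 `` {(g, i)}"
abbreviation "vertex\<^sub>\<beta> g i \<equiv> amalg_rel G (\<beta> \<inter> \<alpha>1) (\<beta> \<inter> \<alpha>2) `` {(g, i)}"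
abbreviation "translate p \<equiv> image (\<lambda>(h, k). (p \<otimes> h, k))"

lemma gens_subset_carrier: "gens i \<subseteq> carrier G"
  using gens_carrier by (auto simp: amalg_gens_def)

lemma generate_gens_carrier: "g \<in> generate G (gens i) \<Longrightarrow> g \<in> carrier G"
  using generate_in_carrier[OF gens_subset_carrier] .

lemma generate_beta_gens_carrier: "a \<in> generate G (\<beta> \<inter> gens i) \<Longrightarrow> a \<in> carrier G"
  using generate_in_carrier gens_subset_carrier by blast

lemma generate_beta_gens_subgroup: "subgroup (generate G (\<beta> \<inter> gens i)) G"
  using generate_is_subgroup gens_subset_carrier by blast

lemma generate_gens_subgroup: "subgroup (generate G (gens i)) G"
  using generate_is_subgroup[OF gens_subset_carrier] .

lemma K_subgroup: "subgroup K G"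
  using generate_is_subgroup gens_carrier by blast

lemma amalg_gens_beta: "amalg_gens (\<beta> \<inter> \<alpha>1) (\<beta> \<inter> \<alpha>2) i = \<beta> \<inter> gens i"
  by (simp add: amalg_gens_def)

lemma amalg_dom_beta_iff:
  "(a, i) \<in> amalg_dom G (\<beta> \<inter> \<alpha>1) (\<beta> \<inter> \<alpha>2) \<longleftrightarrow> i \<in> {1, 2} \<and> a \<in> generate G (\<beta> \<inter> gens i)"
  by (simp add: amalg_dom_iff amalg_gens_beta)

lemma K\<^sub>\<beta>_eq: "generate G ((\<beta> \<inter> \<alpha>1) \<inter> (\<beta> \<inter> \<alpha>2)) = K\<^sub>\<beta>"
  by (simp add: Int_ac)

lemma generate_beta_gens_subset: "generate G (\<beta> \<inter> gens i) \<subseteq> generate G (gens i)"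
  by (rule mono_generate) auto

lemma mult_generate_beta_gens:
  "g \<in> generate G (gens i) \<Longrightarrow> a \<in> generate G (\<beta> \<inter> gens i) \<Longrightarrow> g \<otimes> a \<in> generate G (gens i)"
  using subgroup.m_closed[OF generate_gens_subgroup] generate_beta_gens_subset by blast

lemma K_subset: "i \<in> {1, 2} \<Longrightarrow> K \<subseteq> generate G (gens i)"
  by (rule mono_generate) (auto simp: amalg_gens_def)

lemma K\<^sub>\<beta>_subset: "i \<in> {1, 2} \<Longrightarrow> K\<^sub>\<beta> \<subseteq> generate G (\<beta> \<inter> gens i)"
  by (rule mono_generate) (auto simp: amalg_gens_def)

lemma K\<^sub>\<beta>_subset_K: "K\<^sub>\<beta> \<subseteq> K"
  by (rule mono_generate) auto

lemma generate_beta_gens_Int_K: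
  assumes "i \<in> {1, 2}"
  shows "generate G (\<beta> \<inter> gens i) \<inter> K \<subseteq> K\<^sub>\<beta>"
proof -
  have "two_acyclic G (gens i)" using two_acyclic1 two_acyclic2 by (simp add: amalg_gens_def)
  then have "generate G (\<beta> \<inter> gens i) \<inter> K \<subseteq> generate G ((\<beta> \<inter> gens i) \<inter> (\<alpha>1 \<inter> \<alpha>2))"
    using assms by (intro two_acyclic_generate_Int[OF _ gens_subset_carrier]) (auto simp: amalg_gens_def)
  also have "(\<beta> \<inter> gens i) \<inter> (\<alpha>1 \<inter> \<alpha>2) = \<beta> \<inter> \<alpha>1 \<inter> \<alpha>2"
    using assms by (auto simp: amalg_gens_def)
  finally show ?thesis .
qed

lemma mult_mem_K_iff:
  assumes p: "p \<in> K" and i: "i \<in> {1, 2}" and a: "a \<in> generate G (\<beta> \<inter> gens i)"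
  shows "p \<otimes> a \<in> K \<longleftrightarrow> a \<in> K\<^sub>\<beta>"
proof
  assume "p \<otimes> a \<in> K"
  then have "inv p \<otimes> (p \<otimes> a) \<in> K"
    using p subgroup.m_closed[OF K_subgroup] subgroup.m_inv_closed[OF K_subgroup] by blast
  moreover have "inv p \<otimes> (p \<otimes> a) = a"
    using p a subgroup.mem_carrier[OF K_subgroup] generate_beta_gens_carrier
    by (simp add: m_assoc[symmetric])
  ultimately show "a \<in> K\<^sub>\<beta>" using a generate_beta_gens_Int_K[OF i] by auto
next
  assume "a \<in> K\<^sub>\<beta>"
  then show "p \<otimes> a \<in> K" using p K\<^sub>\<beta>_subset_K subgroup.m_closed[OF K_subgroup] by blast
qed

lemma vertex_path:
  assumes i: "i \<in> {1, 2}" and g: "g \<in> generate G (gens i)" and a: "a \<in> generate G (\<beta> \<inter> gens i)"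
  shows "(vertex g i, vertex (g \<otimes> a) i) \<in> (\<Union>e\<in>\<beta>. snd A e)\<^sup>*"
proof -
  have "(vertex g i, vertex (g \<otimes> a) i) \<in> (\<Union>e\<in>\<beta> \<inter> gens i. snd A e)\<^sup>*"
    using gens_subset_carrier gens_involution
    by (intro amalgam_path[OF i _ _ _ a g]) (auto simp: amalg_gens_def split: if_splits)
  then show ?thesis by (rule rtrancl_mono[THEN subsetD, rotated]) blast
qed

lemma component_iso_Cay:
  assumes i: "i \<in> {1, 2}" and g: "g \<in> generate G (gens i)"
    and apart: "\<And>a. a \<in> generate G (\<beta> \<inter> gens i) \<Longrightarrow> g \<otimes> a \<notin> K"
  shows "egraph_iso E (component \<beta> A (vertex g i)) (Cay G (\<beta> \<inter> gens i))"
proof (rule egraph_iso_componentI[where f = "\<lambda>a. vertex (g \<otimes> a) i" and y = \<one>])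
  let ?H = "generate G (\<beta> \<inter> gens i)"
  have gc: "g \<in> carrier G" using g generate_gens_carrier by blast
  have dom: "(g \<otimes> a, i) \<in> amalg_dom G \<alpha>1 \<alpha>2" if "a \<in> ?H" for a
    using i that g mult_generate_beta_gens by (simp add: amalg_dom_iff)
  show "inj_on (\<lambda>a. vertex (g \<otimes> a) i) (fst (Cay G (\<beta> \<inter> gens i)))"
  proof (rule inj_onI)
    fix a b assume "a \<in> fst (Cay G (\<beta> \<inter> gens i))" "b \<in> fst (Cay G (\<beta> \<inter> gens i))"
      and eq: "vertex (g \<otimes> a) i = vertex (g \<otimes> b) i"
    then have a: "a \<in> ?H" and b: "b \<in> ?H" by (simp_all add: Cay_def)
    then have "g \<otimes> a = g \<otimes> b" using eq amalg_rel_Image_eq_iff[OF dom[OF a] dom[OF b]] by blast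
    then show "a = b" using a b gc generate_beta_gens_carrier by simp
  qed
  show "\<one> \<in> fst (Cay G (\<beta> \<inter> gens i))" by (simp add: Cay_def generate.one)
  show "vertex g i = vertex (g \<otimes> \<one>) i" using gc by simp
  show "(vertex g i, vertex (g \<otimes> a) i) \<in> (\<Union>e\<in>\<beta>. snd A e)\<^sup>*"
    if "a \<in> fst (Cay G (\<beta> \<inter> gens i))" for a
    using vertex_path[OF i g] that by (simp add: Cay_def)
  show "e \<notin> \<beta> \<Longrightarrow> snd (Cay G (\<beta> \<inter> gens i)) e = {}" for e
    by (simp add: Cay_def)
  fix e a w assume e: "e \<in> \<beta>" and a: "a \<in> fst (Cay G (\<beta> \<inter> gens i))"
  then have a: "a \<in> ?H" by (simp add: Cay_def)
  have assoc: "g \<otimes> a \<otimes> e = g \<otimes> (a \<otimes> e)" if "e \<in> gens i"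
    using that gc a generate_beta_gens_carrier gens_subset_carrier by (intro m_assoc) auto
  show "(vertex (g \<otimes> a) i, w) \<in> snd A e \<longleftrightarrow>
      (\<exists>b\<in>fst (Cay G (\<beta> \<inter> gens i)). (a, b) \<in> snd (Cay G (\<beta> \<inter> gens i)) e \<and> w = vertex (g \<otimes> b) i)"
  proof
    assume "(vertex (g \<otimes> a) i, w) \<in> snd A e"
    then obtain k where "e \<in> gens k" "i = k \<or> g \<otimes> a \<in> K" "w = vertex (g \<otimes> a \<otimes> e) k"
      using amalgam_edgeE[OF dom[OF a]] by metis
    then have ek: "e \<in> \<beta> \<inter> gens i" and w: "w = vertex (g \<otimes> (a \<otimes> e)) i"
      using apart[OF a] e assoc by auto
    have "a \<otimes> e \<in> ?H" using subgroup.m_closed[OF generate_beta_gens_subgroup a generate.incl[OF ek]] .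
    then show "\<exists>b\<in>fst (Cay G (\<beta> \<inter> gens i)). (a, b) \<in> snd (Cay G (\<beta> \<inter> gens i)) e \<and> w = vertex (g \<otimes> b) i"
      using ek a w by (auto simp: Cay_def)
  next
    assume "\<exists>b\<in>fst (Cay G (\<beta> \<inter> gens i)). (a, b) \<in> snd (Cay G (\<beta> \<inter> gens i)) e \<and> w = vertex (g \<otimes> b) i"
    then have ek: "e \<in> gens i" and w: "w = vertex (g \<otimes> (a \<otimes> e)) i"
      by (auto simp: Cay_edge_iff)
    show "(vertex (g \<otimes> a) i, w) \<in> snd A e"
      using amalgam_edgeI[OF dom[OF a] ek] w assoc[OF ek] by simp
  qed
qed

lemma amalgam_beta_vertex_iff:
  "U \<in> fst A\<^sub>\<beta> \<longleftrightarrow> (\<exists>b j. j \<in> {1, 2} \<and> b \<in> generate G (\<beta> \<inter> gens j) \<and> U = vertex\<^sub>\<beta> b j)"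
  unfolding amalgam_vertices amalg_dom_beta_iff by blast

lemma K_mult_mem_amalg_dom:
  assumes "p \<in> K" "j \<in> {1, 2}" "b \<in> generate G (\<beta> \<inter> gens j)"
  shows "(p \<otimes> b, j) \<in> amalg_dom G \<alpha>1 \<alpha>2"
proof -
  have "p \<in> generate G (gens j)" using assms K_subset by blast
  then show ?thesis using assms by (simp add: amalg_dom_iff mult_generate_beta_gens)
qed

lemma translate_vertex_beta:
  assumes p: "p \<in> K" and j: "j \<in> {1, 2}" and b: "b \<in> generate G (\<beta> \<inter> gens j)"
  shows "translate p (vertex\<^sub>\<beta> b j) = vertex (p \<otimes> b) j"
proof -
  have dom\<^sub>\<beta>: "(b, j) \<in> amalg_dom G (\<beta> \<inter> \<alpha>1) (\<beta> \<inter> \<alpha>2)"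
    using j b by (simp add: amalg_dom_beta_iff)
  have "vertex (p \<otimes> b) j = {p \<otimes> b} \<times> (if b \<in> K\<^sub>\<beta> then {1, 2} else {j})"
    using amalg_rel_Image[OF K_mult_mem_amalg_dom[OF assms]] mult_mem_K_iff[OF assms] by simp
  moreover have "vertex\<^sub>\<beta> b j = {b} \<times> (if b \<in> K\<^sub>\<beta> then {1, 2} else {j})"
    unfolding amalg_rel_Image[OF dom\<^sub>\<beta>] K\<^sub>\<beta>_eq ..
  ultimately show ?thesis by auto
qed

lemma vertex_switch:
  assumes p: "p \<in> K" and j: "j \<in> {1, 2}" and k: "k \<in> {1, 2}"
    and bj: "b \<in> generate G (\<beta> \<inter> gens j)" and bk: "b \<in> generate G (\<beta> \<inter> gens k)"
    and jk: "j = k \<or> b \<in> K\<^sub>\<beta>"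
  shows "vertex (p \<otimes> b) j = vertex (p \<otimes> b) k" "vertex\<^sub>\<beta> b j = vertex\<^sub>\<beta> b k"
proof -
  have "j = k \<or> p \<otimes> b \<in> K" using jk mult_mem_K_iff[OF p j bj] by blast
  then show "vertex (p \<otimes> b) j = vertex (p \<otimes> b) k"
    using amalg_rel_Image_eq_iff[OF K_mult_mem_amalg_dom[OF p j bj] K_mult_mem_amalg_dom[OF p k bk]]
    by blast
  have "(b, j) \<in> amalg_dom G (\<beta> \<inter> \<alpha>1) (\<beta> \<inter> \<alpha>2)" "(b, k) \<in> amalg_dom G (\<beta> \<inter> \<alpha>1) (\<beta> \<inter> \<alpha>2)"
    using j k bj bk by (simp_all add: amalg_dom_beta_iff)
  then show "vertex\<^sub>\<beta> b j = vertex\<^sub>\<beta> b k"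
    using amalg_rel_Image_eq_iff jk K\<^sub>\<beta>_eq by metis
qed

lemma inj_on_translate:
  assumes p: "p \<in> K"
  shows "inj_on (translate p) (fst A\<^sub>\<beta>)"
proof (rule inj_onI)
  fix U V assume "U \<in> fst A\<^sub>\<beta>" "V \<in> fst A\<^sub>\<beta>" and eq: "translate p U = translate p V"
  then obtain b j c k where bj: "j \<in> {1, 2}" "b \<in> generate G (\<beta> \<inter> gens j)" "U = vertex\<^sub>\<beta> b j"
    and ck: "k \<in> {1, 2}" "c \<in> generate G (\<beta> \<inter> gens k)" "V = vertex\<^sub>\<beta> c k"
    unfolding amalgam_beta_vertex_iff by blast
  have "vertex (p \<otimes> b) j = vertex (p \<otimes> c) k"
    using eq bj ck translate_vertex_beta[OF p] by simp
  then have "p \<otimes> b = p \<otimes> c" "j = k \<or> p \<otimes> b \<in> K"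
    using amalg_rel_Image_eq_iff[OF K_mult_mem_amalg_dom[OF p bj(1,2)] K_mult_mem_amalg_dom[OF p ck(1,2)]]
    by auto
  moreover have "p \<in> carrier G" "b \<in> carrier G" "c \<in> carrier G"
    using p subgroup.mem_carrier[OF K_subgroup] generate_beta_gens_carrier bj(2) ck(2) by blast+
  ultimately have "b = c" "j = k \<or> b \<in> K\<^sub>\<beta>"
    using mult_mem_K_iff[OF p bj(1,2)] by auto
  then show "U = V" using vertex_switch(2)[OF p bj(1) ck(1) bj(2)] ck bj by auto
qed

lemma translate_reachable:
  assumes p: "p \<in> K" and i: "i \<in> {1, 2}" and a: "a \<in> generate G (\<beta> \<inter> gens i)"
    and V: "V \<in> fst A\<^sub>\<beta>"
  shows "(vertex (p \<otimes> a) i, translate p V) \<in> (\<Union>e\<in>\<beta>. snd A e)\<^sup>*"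
proof -
  obtain b j where bj: "j \<in> {1, 2}" "b \<in> generate G (\<beta> \<inter> gens j)" "V = vertex\<^sub>\<beta> b j"
    using V unfolding amalgam_beta_vertex_iff by blast
  have pi: "p \<in> generate G (gens i)" and pj: "p \<in> generate G (gens j)"
    using K_subset[OF i] K_subset[OF bj(1)] p by auto
  have inv_a: "inv a \<in> generate G (\<beta> \<inter> gens i)"
    using a subgroup.m_inv_closed[OF generate_beta_gens_subgroup] by blast
  have "p \<otimes> a \<otimes> inv a = p"
    using generate_gens_carrier[OF pi] generate_beta_gens_carrier[OF a] by (simp add: m_assoc)
  then have "(vertex (p \<otimes> a) i, vertex p i) \<in> (\<Union>e\<in>\<beta>. snd A e)\<^sup>*"
    using vertex_path[OF i mult_generate_beta_gens[OF pi a] inv_a] by simp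
  also have "vertex p i = vertex p j"
    using amalg_rel_Image_eq_iff[of p i G \<alpha>1 \<alpha>2 p j] p pi pj i bj(1) by (simp add: amalg_dom_iff)
  also have "(vertex p j, vertex (p \<otimes> b) j) \<in> (\<Union>e\<in>\<beta>. snd A e)\<^sup>*"
    using vertex_path[OF bj(1) pj bj(2)] .
  finally show ?thesis using translate_vertex_beta[OF p bj(1,2)] bj(3) by simp
qed

lemma translate_edge:
  assumes p: "p \<in> K" and j: "j \<in> {1, 2}" and bj: "b \<in> generate G (\<beta> \<inter> gens j)"
    and k: "k \<in> {1, 2}" and e: "e \<in> \<beta> \<inter> gens k" and jk: "j = k \<or> b \<in> K\<^sub>\<beta>"
  shows "vertex\<^sub>\<beta> (b \<otimes> e) k \<in> fst A\<^sub>\<beta>"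
    and "(vertex\<^sub>\<beta> b j, vertex\<^sub>\<beta> (b \<otimes> e) k) \<in> snd A\<^sub>\<beta> e"
    and "(vertex (p \<otimes> b) j, translate p (vertex\<^sub>\<beta> (b \<otimes> e) k)) \<in> snd A e"
    and "translate p (vertex\<^sub>\<beta> (b \<otimes> e) k) = vertex (p \<otimes> b \<otimes> e) k"
proof -
  have bk: "b \<in> generate G (\<beta> \<inter> gens k)" using bj jk K\<^sub>\<beta>_subset[OF k] by blast
  have be: "b \<otimes> e \<in> generate G (\<beta> \<inter> gens k)"
    using subgroup.m_closed[OF generate_beta_gens_subgroup bk generate.incl[OF e]] .
  show "vertex\<^sub>\<beta> (b \<otimes> e) k \<in> fst A\<^sub>\<beta>" using k be amalgam_beta_vertex_iff by blast
  have "(b, k) \<in> amalg_dom G (\<beta> \<inter> \<alpha>1) (\<beta> \<inter> \<alpha>2)" using k bk by (simp add: amalg_dom_beta_iff)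
  then show "(vertex\<^sub>\<beta> b j, vertex\<^sub>\<beta> (b \<otimes> e) k) \<in> snd A\<^sub>\<beta> e"
    using amalgam_edgeI e vertex_switch(2)[OF p j k bj bk jk] by (metis amalg_gens_beta)
  have "p \<otimes> b \<otimes> e = p \<otimes> (b \<otimes> e)"
    using p subgroup.mem_carrier[OF K_subgroup] bk e generate_beta_gens_carrier gens_subset_carrier
    by (intro m_assoc) blast+
  then show translate: "translate p (vertex\<^sub>\<beta> (b \<otimes> e) k) = vertex (p \<otimes> b \<otimes> e) k"
    using translate_vertex_beta[OF p k be] by simp
  have "(vertex (p \<otimes> b) k, vertex (p \<otimes> b \<otimes> e) k) \<in> snd A e"
    using amalgam_edgeI[OF K_mult_mem_amalg_dom[OF p k bk]] e by blast
  then show "(vertex (p \<otimes> b) j, translate p (vertex\<^sub>\<beta> (b \<otimes> e) k)) \<in> snd A e"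
    using translate vertex_switch(1)[OF p j k bj bk jk] by simp
qed

lemma component_iso_amalgam:
  assumes p: "p \<in> K" and i: "i \<in> {1, 2}" and a: "a \<in> generate G (\<beta> \<inter> gens i)"
  shows "egraph_iso E (component \<beta> A (vertex (p \<otimes> a) i)) A\<^sub>\<beta>"
proof (rule egraph_iso_componentI[where f = "translate p" and y = "vertex\<^sub>\<beta> a i"])
  show "inj_on (translate p) (fst A\<^sub>\<beta>)" using inj_on_translate[OF p] .
  show "vertex\<^sub>\<beta> a i \<in> fst A\<^sub>\<beta>" using i a amalgam_beta_vertex_iff by blast
  show "vertex (p \<otimes> a) i = translate p (vertex\<^sub>\<beta> a i)" using translate_vertex_beta[OF p i a] by simp
  show "V \<in> fst A\<^sub>\<beta> \<Longrightarrow> (vertex (p \<otimes> a) i, translate p V) \<in> (\<Union>e\<in>\<beta>. snd A e)\<^sup>*" for V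
    using translate_reachable[OF p i a] .
  show "e \<notin> \<beta> \<Longrightarrow> snd A\<^sub>\<beta> e = {}" for e
    unfolding amalgam_def by auto
  fix e U w assume e: "e \<in> \<beta>" and "U \<in> fst A\<^sub>\<beta>"
  then obtain b j where bj: "j \<in> {1, 2}" "b \<in> generate G (\<beta> \<inter> gens j)" and U: "U = vertex\<^sub>\<beta> b j"
    unfolding amalgam_beta_vertex_iff by blast
  have dom: "(p \<otimes> b, j) \<in> amalg_dom G \<alpha>1 \<alpha>2" using K_mult_mem_amalg_dom[OF p bj] .
  have dom\<^sub>\<beta>: "(b, j) \<in> amalg_dom G (\<beta> \<inter> \<alpha>1) (\<beta> \<inter> \<alpha>2)" using bj by (simp add: amalg_dom_beta_iff)
  show "(translate p U, w) \<in> snd A e \<longleftrightarrow> (\<exists>V\<in>fst A\<^sub>\<beta>. (U, V) \<in> snd A\<^sub>\<beta> e \<and> w = translate p V)"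
  proof
    assume "(translate p U, w) \<in> snd A e"
    then obtain k where k: "(p \<otimes> b, k) \<in> amalg_dom G \<alpha>1 \<alpha>2" "e \<in> gens k"
      "j = k \<or> p \<otimes> b \<in> K" "w = vertex (p \<otimes> b \<otimes> e) k"
      using amalgam_edgeE[OF dom] U translate_vertex_beta[OF p bj] by metis
    then have "k \<in> {1, 2}" "e \<in> \<beta> \<inter> gens k" "j = k \<or> b \<in> K\<^sub>\<beta>"
      using e mult_mem_K_iff[OF p bj] by (auto simp: amalg_dom_iff)
    then show "\<exists>V\<in>fst A\<^sub>\<beta>. (U, V) \<in> snd A\<^sub>\<beta> e \<and> w = translate p V"
      using translate_edge[OF p bj] U k(4) by metis
  next
    assume "\<exists>V\<in>fst A\<^sub>\<beta>. (U, V) \<in> snd A\<^sub>\<beta> e \<and> w = translate p V"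
    then obtain V where "(vertex\<^sub>\<beta> b j, V) \<in> snd A\<^sub>\<beta> e" "w = translate p V" using U by blast
    then obtain k where k: "(b, k) \<in> amalg_dom G (\<beta> \<inter> \<alpha>1) (\<beta> \<inter> \<alpha>2)" "e \<in> \<beta> \<inter> gens k"
      "j = k \<or> b \<in> K\<^sub>\<beta>" "w = translate p (vertex\<^sub>\<beta> (b \<otimes> e) k)"
      using amalgam_edgeE[OF dom\<^sub>\<beta>] K\<^sub>\<beta>_eq by (metis amalg_gens_beta)
    then show "(translate p U, w) \<in> snd A e"
      using translate_edge(3)[OF p bj] U translate_vertex_beta[OF p bj] by (simp add: amalg_dom_beta_iff)
  qed
qed

lemma component_iso_cases:
  assumes "x \<in> fst A"
  shows "egraph_iso E (component \<beta> A x) (Cay G (\<beta> \<inter> \<alpha>1)) \<or>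
         egraph_iso E (component \<beta> A x) (Cay G (\<beta> \<inter> \<alpha>2)) \<or>
         egraph_iso E (component \<beta> A x) A\<^sub>\<beta>"
proof -
  obtain g i where x: "x = vertex g i" and i: "i \<in> {1, 2}" and g: "g \<in> generate G (gens i)"
    using assms unfolding amalgam_vertices amalg_dom_iff by blast
  show ?thesis
  proof (cases "\<exists>a\<in>generate G (\<beta> \<inter> gens i). g \<otimes> a \<in> K")
    case True
    then obtain a where a: "a \<in> generate G (\<beta> \<inter> gens i)" and p: "g \<otimes> a \<in> K" by blast
    have "inv a \<in> generate G (\<beta> \<inter> gens i)"
      using a subgroup.m_inv_closed[OF generate_beta_gens_subgroup] by blast
    moreover have "g = g \<otimes> a \<otimes> inv a"
      using generate_gens_carrier[OF g] generate_beta_gens_carrier[OF a] by (simp add: m_assoc)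
    ultimately have "egraph_iso E (component \<beta> A x) A\<^sub>\<beta>"
      using component_iso_amalgam[OF p i] x by metis
    then show ?thesis by simp
  next
    case False
    then have "egraph_iso E (component \<beta> A x) (Cay G (\<beta> \<inter> gens i))"
      using component_iso_Cay[OF i g] x by blast
    then show ?thesis using i by (auto simp: amalg_gens_def)
  qed
qed

end

theorem mainTheorem10:
  fixes G :: "('g, 'b) monoid_scheme" and E \<alpha>1 \<alpha>2 \<beta> :: "'g set"
  assumes "E_group G E"
    and "\<alpha>1 \<subset> E" and "\<alpha>2 \<subset> E" and "\<beta> \<subset> E"
    and "two_acyclic G \<alpha>1" and "two_acyclic G \<alpha>2"
    and "x \<in> fst (amalgam G \<alpha>1 \<alpha>2)"
  shows "egraph_iso E (component \<beta> (amalgam G \<alpha>1 \<alpha>2) x) (Cay G (\<beta> \<inter> \<alpha>1)) \<or>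
         egraph_iso E (component \<beta> (amalgam G \<alpha>1 \<alpha>2) x) (Cay G (\<beta> \<inter> \<alpha>2)) \<or>
         egraph_iso E (component \<beta> (amalgam G \<alpha>1 \<alpha>2) x)
                      (amalgam G (\<beta> \<inter> \<alpha>1) (\<beta> \<inter> \<alpha>2))"
proof -
  have "group G" "E \<subseteq> carrier G" "\<forall>e\<in>E. e \<otimes>\<^bsub>G\<^esub> e = \<one>\<^bsub>G\<^esub>"
    using assms(1) unfolding E_group_def by auto
  \<comment> \<open>only \<open>\<alpha>1, \<alpha>2 \<subseteq> E\<close> is needed\<close>
  then interpret two_acyclic_amalgam G \<alpha>1 \<alpha>2 \<beta>
    using assms(2,3,5,6) by (intro two_acyclic_amalgam.intro two_acyclic_amalgam_axioms.intro) auto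
  show ?thesis using component_iso_cases[OF assms(7)] .
qed

end
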